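(* Let $\mathbf{k}$ be an algebraically closed field with $\mathrm{char}(\mathbf{k})\neq 2$ and let $E=\bigwedge E_1$ be the exterior algebra of a $5$-dimensional $\mathbf{k}$-vector space $E_1$. Let $U\subseteq E_2$ be a $3$-dimensional subspace such that $\dim_{\mathbf{k}}(U\wedge E_1)\ge 7$. Then $U\subseteq\bigwedge^2W$ for some $3$-dimensional subspace $W\subseteq E_1$ if and only if $U^2=0$, i.e. $u\wedge u'=0$ for all $u,u'\in U$. *)

theory Defs
  imports "HOL-Computational_Algebra.Polynomial" "HOL-Library.Function_Algebras"
begin

text \<open>Concrete model of the exterior algebra E of E_1 = k^5 with basis e_0,...,e_4.
  An element of E is a function from finite sets of indices to k: x S is the coefficient
  of e_S = e_{s_1} wedge ... wedge e_{s_p} (s_1 < ... < s_p). Only sets S contained in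
  {0..<5} are relevant; the graded pieces ext_grade p select the homogeneous elements.\<close>

type_synonym 'k ext = "nat set \<Rightarrow> 'k"

definition escale :: "'k::field \<Rightarrow> 'k ext \<Rightarrow> 'k ext" where
  "escale c x = (\<lambda>S. c * x S)"

definition ext_grade :: "nat \<Rightarrow> ('k::field) ext set" where
  "ext_grade p = {x. \<forall>S. x S \<noteq> 0 \<longrightarrow> S \<subseteq> {..<5} \<and> card S = p}"

text \<open>Sign of e_A wedge e_B relative to e_{A union B} (A, B disjoint).\<close>
definition shuffle_sign :: "nat set \<Rightarrow> nat set \<Rightarrow> 'k::field" where
  "shuffle_sign A B = (-1) ^ card {(a, b). a \<in> A \<and> b \<in> B \<and> b < a}"

definition wedge :: "'k::field ext \<Rightarrow> 'k ext \<Rightarrow> 'k ext" where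
  "wedge x y = (\<lambda>S. \<Sum>A\<in>Pow S. shuffle_sign A (S - A) * x A * y (S - A))"

abbreviation ext_dim :: "'k::field ext set \<Rightarrow> nat" where
  "ext_dim V \<equiv> vector_space.dim escale V"

abbreviation ext_span :: "'k::field ext set \<Rightarrow> 'k ext set" where
  "ext_span V \<equiv> module.span escale V"

abbreviation ext_subspace :: "'k::field ext set \<Rightarrow> bool" where
  "ext_subspace V \<equiv> module.subspace escale V"

definition wedge_sp :: "'k::field ext set \<Rightarrow> 'k ext set \<Rightarrow> 'k ext set" where
  "wedge_sp U V = ext_span {wedge u v | u v. u \<in> U \<and> v \<in> V}"

end

theory Submission
  imports Defs
begin

text \<open>If \<open>U \<subseteq> \<And>\<^sup>2 W\<close> with \<open>dim W = 3\<close>, any two of the products \<open>x \<and> y, x \<and> z, y \<and> z\<close> of a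
  basis of \<open>W\<close> share a factor, so \<open>U\<^sup>2 = 0\<close>. Conversely, if \<open>U\<^sup>2 = 0\<close>, every \<open>u \<in> U\<close> has
  \<open>u \<and> u = 0\<close>, which by the Pluecker relations (here \<open>char k \<noteq> 2\<close> is used) makes \<open>u\<close>
  decomposable, and two decomposable 2-vectors with vanishing product share a linear factor.
  Hence \<open>U\<close> has a basis \<open>f \<and> x, f \<and> y, u\<^sub>3\<close> with \<open>f \<and> x \<and> y \<noteq> 0\<close>, and comparing the common
  factors of \<open>u\<^sub>3\<close> with the first two basis vectors shows that either \<open>u\<^sub>3 \<in> \<And>\<^sup>2\<langle>f, x, y\<rangle>\<close>,
  or \<open>f\<close> divides all of \<open>U\<close>. In the latter case \<open>U \<and> E\<^sub>1\<close> lies in the annihilator of \<open>f\<close>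
  in \<open>E\<^sub>3\<close>, which is 6-dimensional, contradicting \<open>dim (U \<and> E\<^sub>1) \<ge> 7\<close>.\<close>

lemma vector_space_escale: "vector_space (escale :: 'k::field \<Rightarrow> 'k ext \<Rightarrow> 'k ext)"
  by unfold_locales (auto simp: escale_def fun_eq_iff algebra_simps)

interpretation ext: vector_space "escale :: 'k::field \<Rightarrow> 'k ext \<Rightarrow> 'k ext"
  by (rule vector_space_escale)

lemma escale_apply [simp]: "escale c x S = c * x S"
  by (simp add: escale_def)

lemma wedge_add_left: "wedge (x + y) z = wedge x z + wedge y z"
  by (simp add: wedge_def fun_eq_iff algebra_simps sum.distrib)

lemma wedge_add_right: "wedge x (y + z) = wedge x y + wedge x z"
  by (simp add: wedge_def fun_eq_iff algebra_simps sum.distrib)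

lemma wedge_scale_left: "wedge (escale c x) z = escale c (wedge x z)"
  by (simp add: wedge_def fun_eq_iff algebra_simps sum_distrib_left)

lemma wedge_scale_right: "wedge x (escale c z) = escale c (wedge x z)"
  by (simp add: wedge_def fun_eq_iff algebra_simps sum_distrib_left)

lemma wedge_zero_left [simp]: "wedge 0 z = 0"
  by (simp add: wedge_def fun_eq_iff)

lemma wedge_zero_right [simp]: "wedge z 0 = 0"
  by (simp add: wedge_def fun_eq_iff)

lemma wedge_minus_right: "wedge z (- x) = - wedge z x"
  by (simp add: wedge_def fun_eq_iff sum_negf)

lemma wedge_span_subset:
  assumes "ext_subspace T" and "\<And>a b. a \<in> A \<Longrightarrow> b \<in> B \<Longrightarrow> wedge a b \<in> T"
    and "p \<in> ext_span A" and "q \<in> ext_span B"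
  shows "wedge p q \<in> T"
proof -
  have "wedge p b \<in> T" if "b \<in> B" for b
  proof -
    have "ext_subspace {p. wedge p b \<in> T}"
      unfolding ext.subspace_def using assms(1)
      by (auto simp: wedge_add_left wedge_scale_left
          intro: ext.subspace_add ext.subspace_scale ext.subspace_0)
    then have "ext_span A \<subseteq> {p. wedge p b \<in> T}"
      using assms(2) that by (intro ext.span_minimal) auto
    then show ?thesis using assms(3) by blast
  qed
  moreover have "ext_subspace {q. wedge p q \<in> T}"
    unfolding ext.subspace_def using assms(1)
    by (auto simp: wedge_add_right wedge_scale_right
        intro: ext.subspace_add ext.subspace_scale ext.subspace_0)
  ultimately have "ext_span B \<subseteq> {q. wedge p q \<in> T}"
    by (intro ext.span_minimal) auto
  then show ?thesis using assms(4) by blast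
qed

lemma zero_in_ext_grade [simp]: "0 \<in> ext_grade n"
  by (simp add: ext_grade_def)

lemma ext_grade_apply_eq_0: "x \<in> ext_grade n \<Longrightarrow> \<not> (S \<subseteq> {..<5} \<and> card S = n) \<Longrightarrow> x S = 0"
  unfolding ext_grade_def by auto

lemma subspace_ext_grade: "ext_subspace (ext_grade n)"
  unfolding ext.subspace_def ext_grade_def
  by (auto, (metis add.right_neutral subsetD lessThan_iff)+)

lemma ext_grade_scale: "a \<in> ext_grade n \<Longrightarrow> escale \<alpha> a \<in> ext_grade n"
  by (meson ext.subspace_scale subspace_ext_grade)

lemma ext_grade_add: "a \<in> ext_grade n \<Longrightarrow> b \<in> ext_grade n \<Longrightarrow> a + b \<in> ext_grade n"
  by (meson ext.subspace_add subspace_ext_grade)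

lemma ext_grade_neg: "a \<in> ext_grade n \<Longrightarrow> - a \<in> ext_grade n"
  by (meson ext.subspace_neg subspace_ext_grade)

lemma ext_grade_lincomb:
  "a \<in> ext_grade n \<Longrightarrow> b \<in> ext_grade n \<Longrightarrow> escale \<alpha> a + escale \<beta> b \<in> ext_grade n"
  by (simp add: ext_grade_add ext_grade_scale)

lemma wedge_apply_infinite: "infinite S \<Longrightarrow> wedge x y S = 0"
  by (simp add: wedge_def)

lemma wedge_in_ext_grade:
  assumes "x \<in> ext_grade p" "y \<in> ext_grade q"
  shows "wedge x y \<in> ext_grade (p + q)"
  unfolding ext_grade_def
proof (intro CollectI allI impI)
  fix S assume nz: "wedge x y S \<noteq> 0"
  then have fin: "finite S" using wedge_apply_infinite by blast
  from nz obtain A where A: "A \<subseteq> S" "x A \<noteq> 0" "y (S - A) \<noteq> 0"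
    unfolding wedge_def by (metis (no_types, lifting) PowD mult_eq_0_iff sum.neutral)
  with assms have "A \<subseteq> {..<5}" "card A = p" "S - A \<subseteq> {..<5}" "card (S - A) = q"
    unfolding ext_grade_def by auto
  moreover have "card S = card A + card (S - A)"
    using A(1) fin by (metis card_Diff_subset card_mono finite_subset le_add_diff_inverse)
  ultimately show "S \<subseteq> {..<5} \<and> card S = p + q" using A(1) by auto
qed

lemma wedge_in_ext_grade_2: "a \<in> ext_grade 1 \<Longrightarrow> b \<in> ext_grade 1 \<Longrightarrow> wedge a b \<in> ext_grade 2"
  using wedge_in_ext_grade[of a 1 b 1] by (simp add: eval_nat_numeral)

lemma wedge_in_ext_grade_3: "a \<in> ext_grade 2 \<Longrightarrow> b \<in> ext_grade 1 \<Longrightarrow> wedge a b \<in> ext_grade 3"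
  using wedge_in_ext_grade[of a 2 b 1] by (simp add: eval_nat_numeral)

lemma wedge_in_ext_grade_4_22: "a \<in> ext_grade 2 \<Longrightarrow> b \<in> ext_grade 2 \<Longrightarrow> wedge a b \<in> ext_grade 4"
  using wedge_in_ext_grade[of a 2 b 2] by (simp add: eval_nat_numeral)

lemma wedge_in_ext_grade_4_31: "a \<in> ext_grade 3 \<Longrightarrow> b \<in> ext_grade 1 \<Longrightarrow> wedge a b \<in> ext_grade 4"
  using wedge_in_ext_grade[of a 3 b 1] by (simp add: eval_nat_numeral)

lemma shuffle_sign_nonzero [simp]: "(shuffle_sign A B :: 'k::field) \<noteq> 0"
  by (simp add: shuffle_sign_def)

lemma shuffle_sign_eq_power_sum:
  assumes "finite A" "finite B"
  shows "(shuffle_sign A B :: 'k::field) = (-1) ^ (\<Sum>a\<in>A. card {b \<in> B. b < a})"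
proof -
  have "{(a, b). a \<in> A \<and> b \<in> B \<and> b < a} = Sigma A (\<lambda>a. {b \<in> B. b < a})" by auto
  then have "card {(a, b). a \<in> A \<and> b \<in> B \<and> b < a} = (\<Sum>a\<in>A. card {b \<in> B. b < a})"
    using assms by (simp add: card_SigmaI)
  then show ?thesis by (simp add: shuffle_sign_def)
qed

lemma Collect_mem_insert_conj:
  "{b \<in> insert x B. P b} = (if P x then insert x {b \<in> B. P b} else {b \<in> B. P b})"
  by auto

lemma Collect_eq_conj: "{b. b = j \<and> P b} = (if P j then {j} else {})"
  by auto

lemma Collect_eq_disj_conj:
  "{b. (b = j \<or> Q b) \<and> P b} = (if P j then insert j {b. Q b \<and> P b} else {b. Q b \<and> P b})"
  by auto

lemmas shuffle_sign_simps =
  shuffle_sign_eq_power_sum Collect_mem_insert_conj Collect_eq_conj Collect_eq_disj_conj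

lemma ext_grade_1_support: "x \<in> ext_grade 1 \<Longrightarrow> x A \<noteq> 0 \<Longrightarrow> \<exists>m. A = {m} \<and> m < 5"
  unfolding ext_grade_def by (auto simp: card_1_singleton_iff)

lemma ext_grade_2_support:
  "x \<in> ext_grade 2 \<Longrightarrow> x A \<noteq> 0 \<Longrightarrow> \<exists>a b. A = {a, b} \<and> a < b \<and> b < 5"
  unfolding ext_grade_def
  by (auto simp: card_2_iff) (metis insert_commute insert_subset lessThan_iff linorder_neqE_nat)

lemma wedge_grade_1_left_apply:
  assumes "x \<in> ext_grade 1" "finite S"
  shows "wedge x y S = (\<Sum>m\<in>S. shuffle_sign {m} (S - {m}) * x {m} * y (S - {m}))"
proof -
  let ?f = "\<lambda>A. shuffle_sign A (S - A) * x A * y (S - A)"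
  have "wedge x y S = sum ?f (Pow S)" by (simp add: wedge_def)
  also have "\<dots> = sum ?f ((\<lambda>m. {m}) ` S)"
  proof (rule sum.mono_neutral_right)
    show "\<forall>A\<in>Pow S - (\<lambda>m. {m}) ` S. ?f A = 0"
      using ext_grade_1_support[OF assms(1)] by fastforce
  qed (use assms in auto)
  also have "\<dots> = (\<Sum>m\<in>S. ?f {m})" by (subst sum.reindex) (auto simp: inj_on_def)
  finally show ?thesis .
qed

lemma wedge_grade_1_right_apply:
  assumes "y \<in> ext_grade 1" "finite S"
  shows "wedge x y S = (\<Sum>m\<in>S. shuffle_sign (S - {m}) {m} * x (S - {m}) * y {m})"
proof -
  let ?f = "\<lambda>A. shuffle_sign A (S - A) * x A * y (S - A)"
  have "wedge x y S = sum ?f (Pow S)" by (simp add: wedge_def)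
  also have "\<dots> = sum ?f ((\<lambda>m. S - {m}) ` S)"
  proof (rule sum.mono_neutral_right)
    show "\<forall>A\<in>Pow S - (\<lambda>m. S - {m}) ` S. ?f A = 0"
    proof
      fix A assume A: "A \<in> Pow S - (\<lambda>m. S - {m}) ` S"
      show "?f A = 0"
      proof (rule ccontr)
        assume "?f A \<noteq> 0"
        then obtain m where "S - A = {m}" using ext_grade_1_support[OF assms(1)] by auto
        then have "A = S - {m}" "m \<in> S" using A by auto
        then show False using A by auto
      qed
    qed
  qed (use assms in auto)
  also have "\<dots> = (\<Sum>m\<in>S. ?f (S - {m}))"
    by (subst sum.reindex) (auto simp: inj_on_def)
  also have "\<dots> = (\<Sum>m\<in>S. shuffle_sign (S - {m}) {m} * x (S - {m}) * y {m})"
    by (rule sum.cong) (auto simp: Diff_Diff_Int Int_absorb1)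
  finally show ?thesis .
qed

lemma wedge_grade_2_left_apply:
  assumes "x \<in> ext_grade 2" "finite S"
  shows "wedge x y S = (\<Sum>(a, b)\<in>{(a, b). a \<in> S \<and> b \<in> S \<and> a < b}.
          shuffle_sign {a, b} (S - {a, b}) * x {a, b} * y (S - {a, b}))"
proof -
  let ?f = "\<lambda>A. shuffle_sign A (S - A) * x A * y (S - A)"
  let ?P = "{(a, b). a \<in> S \<and> b \<in> S \<and> a < b}"
  have "wedge x y S = sum ?f (Pow S)" by (simp add: wedge_def)
  also have "\<dots> = sum ?f ((\<lambda>(a, b). {a, b}) ` ?P)"
  proof (rule sum.mono_neutral_right)
    show "\<forall>A\<in>Pow S - (\<lambda>(a, b). {a, b}) ` ?P. ?f A = 0"
    proof
      fix A assume A: "A \<in> Pow S - (\<lambda>(a, b). {a, b}) ` ?P"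
      show "?f A = 0"
      proof (rule ccontr)
        assume "?f A \<noteq> 0"
        then have "x A \<noteq> 0" by auto
        then obtain a b where "A = {a, b}" "a < b" using ext_grade_2_support[OF assms(1)] by blast
        then show False using A by (auto simp: image_iff)
      qed
    qed
  qed (use assms in auto)
  also have "\<dots> = (\<Sum>(a, b)\<in>?P. ?f {a, b})"
    by (subst sum.reindex) (auto simp: inj_on_def doubleton_eq_iff case_prod_beta)
  finally show ?thesis .
qed

lemma wedge_apply_2:
  assumes "a \<in> ext_grade 1" "b \<in> ext_grade 1" "i < j"
  shows "wedge a b {i, j} = a {i} * b {j} - a {j} * b {i}"
  using assms by (simp add: wedge_grade_1_left_apply shuffle_sign_simps insert_Diff_if)

lemma wedge_apply_3:
  assumes "P \<in> ext_grade 2" "c \<in> ext_grade 1" "i < j" "j < k"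
  shows "wedge P c {i, j, k} = P {i, j} * c {k} - P {i, k} * c {j} + P {j, k} * c {i}"
  using assms
  by (simp add: wedge_grade_1_right_apply shuffle_sign_simps insert_Diff_if insert_commute)

lemma wedge_apply_4_31:
  assumes "X \<in> ext_grade 3" "d \<in> ext_grade 1" "i < j" "j < k" "k < l"
  shows "wedge X d {i, j, k, l} =
    X {i, j, k} * d {l} - X {i, j, l} * d {k} + X {i, k, l} * d {j} - X {j, k, l} * d {i}"
  using assms
  by (simp add: wedge_grade_1_right_apply shuffle_sign_simps insert_Diff_if insert_commute)

lemma wedge_apply_4_22:
  fixes P Q :: "'k::field ext"
  assumes "P \<in> ext_grade 2" "Q \<in> ext_grade 2" "i < j" "j < k" "k < l"
  shows "wedge P Q {i, j, k, l} = P {i, j} * Q {k, l} - P {i, k} * Q {j, l} + P {i, l} * Q {j, k}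
      + P {j, k} * Q {i, l} - P {j, l} * Q {i, k} + P {k, l} * Q {i, j}"
proof -
  let ?S = "{i, j, k, l}"
  let ?t = "\<lambda>a b. shuffle_sign {a, b} (?S - {a, b}) * P {a, b} * Q (?S - {a, b})"
  have pairs: "{(a, b). a \<in> ?S \<and> b \<in> ?S \<and> a < b} = {(i,j), (i,k), (i,l), (j,k), (j,l), (k,l)}"
    using assms by auto
  have "wedge P Q ?S = ?t i j + (?t i k + (?t i l + (?t j k + (?t j l + ?t k l))))"
    using assms by (simp only: wedge_grade_2_left_apply pairs finite.emptyI finite_insert)
      ((subst sum.insert, simp, simp)+, simp)
  moreover have "?S - {i, j} = {k, l}" "?S - {i, k} = {j, l}" "?S - {i, l} = {j, k}"
    "?S - {j, k} = {i, l}" "?S - {j, l} = {i, k}" "?S - {k, l} = {i, j}"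
    using assms by auto
  moreover have "(shuffle_sign {i, j} {k, l} :: 'k) = 1" "(shuffle_sign {i, k} {j, l} :: 'k) = -1"
    "(shuffle_sign {i, l} {j, k} :: 'k) = 1" "(shuffle_sign {j, k} {i, l} :: 'k) = 1"
    "(shuffle_sign {j, l} {i, k} :: 'k) = -1" "(shuffle_sign {k, l} {i, j} :: 'k) = 1"
    using assms by (simp_all add: shuffle_sign_simps)
  ultimately show ?thesis by simp
qed

lemma ext_grade_eqI:
  assumes "x \<in> ext_grade n" "y \<in> ext_grade n"
    and "\<And>S. S \<subseteq> {..<5} \<Longrightarrow> card S = n \<Longrightarrow> x S = y S"
  shows "x = y"
proof
  fix S show "x S = y S"
    using assms by (cases "S \<subseteq> {..<5} \<and> card S = n") (auto simp: ext_grade_apply_eq_0)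
qed

lemma card_2_sorted: "card S = 2 \<Longrightarrow> \<exists>i j::nat. i < j \<and> S = {i, j}"
  by (auto simp: card_2_iff) (metis insert_commute linorder_neqE_nat)

lemma card_3_sorted:
  assumes "card S = 3" shows "\<exists>i j k::nat. i < j \<and> j < k \<and> S = {i, j, k}"
proof -
  have fin: "finite S" using assms card.infinite by fastforce
  then have "length (sorted_list_of_set S) = 3" using assms by simp
  then obtain i j k where xs: "sorted_list_of_set S = [i, j, k]"
    by (auto simp del: length_sorted_list_of_set simp: numeral_3_eq_3 length_Suc_conv)
  then have "i < j" "j < k" using strict_sorted_list_of_set[of S] by auto
  moreover have "S = {i, j, k}" using set_sorted_list_of_set[OF fin] unfolding xs by simp
  ultimately show ?thesis by blast
qed

lemma card_4_sorted:
  assumes "card S = 4" shows "\<exists>i j k l::nat. i < j \<and> j < k \<and> k < l \<and> S = {i, j, k, l}"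
proof -
  have fin: "finite S" using assms card.infinite by fastforce
  then have "length (sorted_list_of_set S) = 4" using assms by simp
  then obtain i j k l where xs: "sorted_list_of_set S = [i, j, k, l]"
    by (auto simp del: length_sorted_list_of_set simp: numeral_Bit0 length_Suc_conv)
  then have "i < j" "j < k" "k < l" using strict_sorted_list_of_set[of S] by auto
  moreover have "S = {i, j, k, l}" using set_sorted_list_of_set[OF fin] unfolding xs by simp
  ultimately show ?thesis by blast
qed

lemma ext_grade_1_eqI:
  assumes "x \<in> ext_grade 1" "y \<in> ext_grade 1" "\<And>i. i < 5 \<Longrightarrow> x {i} = y {i}"
  shows "x = y"
  using assms(1,2) by (rule ext_grade_eqI) (auto simp: card_1_singleton_iff assms(3))

lemma ext_grade_2_eqI:
  assumes "x \<in> ext_grade 2" "y \<in> ext_grade 2"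
    and "\<And>i j. i < j \<Longrightarrow> j < 5 \<Longrightarrow> x {i, j} = y {i, j}"
  shows "x = y"
  using assms(1,2) by (rule ext_grade_eqI) (auto dest!: card_2_sorted intro: assms(3))

lemma ext_grade_3_eqI:
  assumes "x \<in> ext_grade 3" "y \<in> ext_grade 3"
    and "\<And>i j k. i < j \<Longrightarrow> j < k \<Longrightarrow> k < 5 \<Longrightarrow> x {i, j, k} = y {i, j, k}"
  shows "x = y"
  using assms(1,2) by (rule ext_grade_eqI) (auto dest!: card_3_sorted intro: assms(3))

lemma ext_grade_4_eqI:
  assumes "x \<in> ext_grade 4" "y \<in> ext_grade 4"
    and "\<And>i j k l. i < j \<Longrightarrow> j < k \<Longrightarrow> k < l \<Longrightarrow> l < 5 \<Longrightarrow> x {i, j, k, l} = y {i, j, k, l}"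
  shows "x = y"
  using assms(1,2) by (rule ext_grade_eqI) (auto dest!: card_4_sorted intro: assms(3))

lemma ext_grade_1_nonzero_coeff:
  assumes "u \<in> ext_grade 1" "u \<noteq> 0" obtains i where "i < 5" "u {i} \<noteq> 0"
  using ext_grade_1_eqI[OF assms(1) zero_in_ext_grade] assms(2) by fastforce

lemma ext_grade_2_nonzero_coeff:
  assumes "u \<in> ext_grade 2" "u \<noteq> 0" obtains i j where "i < j" "j < 5" "u {i, j} \<noteq> 0"
  using ext_grade_2_eqI[OF assms(1) zero_in_ext_grade] assms(2) by fastforce

lemma ext_grade_3_nonzero_coeff:
  assumes "u \<in> ext_grade 3" "u \<noteq> 0"
  obtains i j k where "i < j" "j < k" "k < 5" "u {i, j, k} \<noteq> 0"
  using ext_grade_3_eqI[OF assms(1) zero_in_ext_grade] assms(2) by fastforce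

lemma wedge_self_grade_1: assumes "a \<in> ext_grade 1" shows "wedge a a = 0"
proof (rule ext_grade_2_eqI)
  show "wedge a a \<in> ext_grade 2" using wedge_in_ext_grade_2 assms by blast
  fix i j :: nat assume "i < j" "j < 5"
  then show "wedge a a {i, j} = 0 {i, j}"
    using wedge_apply_2[OF assms assms \<open>i < j\<close>] by (simp add: mult.commute)
qed simp

lemma wedge_commute_grade_1:
  assumes "a \<in> ext_grade 1" "b \<in> ext_grade 1" shows "wedge b a = - wedge a b"
proof (rule ext_grade_2_eqI)
  show "wedge b a \<in> ext_grade 2" "- wedge a b \<in> ext_grade 2"
    using assms by (simp_all add: wedge_in_ext_grade_2 ext_grade_neg)
  fix i j :: nat assume "i < j" "j < 5"
  then show "wedge b a {i, j} = (- wedge a b) {i, j}"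
    using wedge_apply_2[OF assms \<open>i < j\<close>] wedge_apply_2[OF assms(2,1) \<open>i < j\<close>]
    by (simp add: mult.commute)
qed

lemma wedge_apply_3_vectors:
  assumes "a \<in> ext_grade 1" "b \<in> ext_grade 1" "c \<in> ext_grade 1" "i < j" "j < k"
  shows "wedge (wedge a b) c {i, j, k} = (a{i}*b{j} - a{j}*b{i})*c{k}
    - (a{i}*b{k} - a{k}*b{i})*c{j} + (a{j}*b{k} - a{k}*b{j})*c{i}"
  using assms wedge_apply_3[OF wedge_in_ext_grade_2[OF assms(1,2)] assms(3-5)]
  by (simp add: wedge_apply_2)

lemma wedge_apply_4_vectors:
  assumes "a \<in> ext_grade 1" "b \<in> ext_grade 1" "c \<in> ext_grade 1" "d \<in> ext_grade 1"
    and "i < j" "j < k" "k < l"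
  shows "wedge (wedge a b) (wedge c d) {i, j, k, l} =
      (a{i}*b{j} - a{j}*b{i}) * (c{k}*d{l} - c{l}*d{k}) - (a{i}*b{k} - a{k}*b{i}) * (c{j}*d{l} - c{l}*d{j})
    + (a{i}*b{l} - a{l}*b{i}) * (c{j}*d{k} - c{k}*d{j}) + (a{j}*b{k} - a{k}*b{j}) * (c{i}*d{l} - c{l}*d{i})
    - (a{j}*b{l} - a{l}*b{j}) * (c{i}*d{k} - c{k}*d{i}) + (a{k}*b{l} - a{l}*b{k}) * (c{i}*d{j} - c{j}*d{i})"
  using assms
    wedge_apply_4_22[OF wedge_in_ext_grade_2[OF assms(1,2)] wedge_in_ext_grade_2[OF assms(3,4)] assms(5-7)]
  by (simp add: wedge_apply_2)

lemma wedge_wedge_left_self: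
  assumes "a \<in> ext_grade 1" "b \<in> ext_grade 1" shows "wedge (wedge a b) a = 0"
proof (rule ext_grade_3_eqI)
  show "wedge (wedge a b) a \<in> ext_grade 3"
    using assms by (simp add: wedge_in_ext_grade_2 wedge_in_ext_grade_3)
  fix i j k :: nat assume "i < j" "j < k" "k < 5"
  then show "wedge (wedge a b) a {i, j, k} = 0 {i, j, k}"
    using wedge_apply_3_vectors[OF assms assms(1)] by (simp add: algebra_simps)
qed simp

lemma wedge_wedge_right_self:
  assumes "a \<in> ext_grade 1" "b \<in> ext_grade 1" shows "wedge (wedge a b) b = 0"
proof (rule ext_grade_3_eqI)
  show "wedge (wedge a b) b \<in> ext_grade 3"
    using assms by (simp add: wedge_in_ext_grade_2 wedge_in_ext_grade_3)
  fix i j k :: nat assume "i < j" "j < k" "k < 5"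
  then show "wedge (wedge a b) b {i, j, k} = 0 {i, j, k}"
    using wedge_apply_3_vectors[OF assms assms(2)] by (simp add: algebra_simps)
qed simp

lemma wedge_wedge_swap_right:
  assumes "a \<in> ext_grade 1" "b \<in> ext_grade 1" "c \<in> ext_grade 1"
  shows "wedge (wedge a c) b = - wedge (wedge a b) c"
proof (rule ext_grade_3_eqI)
  show "wedge (wedge a c) b \<in> ext_grade 3" "- wedge (wedge a b) c \<in> ext_grade 3"
    using assms by (simp_all add: wedge_in_ext_grade_2 wedge_in_ext_grade_3 ext_grade_neg)
  fix i j k :: nat assume ijk: "i < j" "j < k" "k < 5"
  show "wedge (wedge a c) b {i, j, k} = (- wedge (wedge a b) c) {i, j, k}"
    by (simp add: wedge_apply_3_vectors[OF assms(1,3,2) ijk(1,2)]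
        wedge_apply_3_vectors[OF assms ijk(1,2)] algebra_simps)
qed

lemma wedge_wedge_eq_0_if_common_factor:
  assumes "a \<in> ext_grade 1" "b \<in> ext_grade 1" "c \<in> ext_grade 1" "d \<in> ext_grade 1"
    and "a = c \<or> a = d \<or> b = c \<or> b = d"
  shows "wedge (wedge a b) (wedge c d) = 0"
proof (rule ext_grade_4_eqI)
  show "wedge (wedge a b) (wedge c d) \<in> ext_grade 4"
    using assms by (simp add: wedge_in_ext_grade_2 wedge_in_ext_grade_4_22)
  fix i j k l :: nat assume "i < j" "j < k" "k < l" "l < 5"
  then show "wedge (wedge a b) (wedge c d) {i, j, k, l} = 0 {i, j, k, l}"
    using wedge_apply_4_vectors[OF assms(1-4)] assms(5) by (elim disjE; simp add: algebra_simps)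
qed simp

lemma wedge_wedge_wedge_self:
  assumes "e \<in> ext_grade 1" "x \<in> ext_grade 1" "v \<in> ext_grade 1"
  shows "wedge (wedge (wedge e x) v) e = 0"
proof (rule ext_grade_4_eqI)
  show "wedge (wedge (wedge e x) v) e \<in> ext_grade 4"
    using assms by (simp add: wedge_in_ext_grade_2 wedge_in_ext_grade_3 wedge_in_ext_grade_4_31)
  fix i j k l :: nat assume "i < j" "j < k" "k < l" "l < 5"
  then show "wedge (wedge (wedge e x) v) e {i, j, k, l} = 0 {i, j, k, l}"
    using assms by (simp add: wedge_apply_4_31 wedge_apply_3_vectors wedge_in_ext_grade_2
        wedge_in_ext_grade_3 algebra_simps)
qed simp

subsection \<open>Decomposable 2-vectors\<close>

definition plucker_form :: "(nat \<Rightarrow> nat \<Rightarrow> 'k::field) \<Rightarrow> nat \<Rightarrow> nat \<Rightarrow> nat \<Rightarrow> nat \<Rightarrow> 'k" where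
  "plucker_form P a b c d = P a b * P c d - P a c * P b d + P a d * P b c"

lemma plucker_form_swap:
  assumes "\<And>a b. P a b = - P b a"
  shows "plucker_form P b a c d = - plucker_form P a b c d"
    and "plucker_form P a c b d = - plucker_form P a b c d"
    and "plucker_form P a b d c = - plucker_form P a b c d"
    and "plucker_form P c d a b = plucker_form P a b c d"
  unfolding plucker_form_def
  by (simp_all add: assms[of b a] assms[of c a] assms[of c b] assms[of d a] assms[of d b]
      assms[of d c] algebra_simps)

lemma plucker_form_eq_0_if_sorted_le:
  assumes "\<And>a. P a a = 0"
    and "\<And>a b c d. a < b \<Longrightarrow> b < c \<Longrightarrow> c < d \<Longrightarrow> d < 5 \<Longrightarrow> plucker_form P a b c d = 0"
    and "a \<le> b" "b \<le> c" "c \<le> d" "d < 5"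
  shows "plucker_form P a b c d = 0"
proof (cases "a = b \<or> b = c \<or> c = d")
  case True then show ?thesis by (elim disjE) (simp_all add: plucker_form_def assms(1))
next
  case False then show ?thesis using assms(2-6) by simp
qed

text \<open>The Pluecker form of an antisymmetric \<open>P\<close> is alternating, so its vanishing on strictly
  increasing indices propagates to all indices.\<close>

lemma plucker_form_eq_0:
  assumes anti: "\<And>a b. P a b = - P b a" and diag: "\<And>a. P a a = 0"
    and sorted: "\<And>a b c d. a < b \<Longrightarrow> b < c \<Longrightarrow> c < d \<Longrightarrow> d < 5 \<Longrightarrow> plucker_form P a b c d = 0"
    and "a < 5" "b < 5" "c < 5" "d < 5"
  shows "plucker_form P a b c d = 0"
proof -
  note swap = plucker_form_swap[of P, OF anti]
  note sorted_le = plucker_form_eq_0_if_sorted_le[of P, OF diag sorted]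
  have first_le_third: "plucker_form P a b c d = 0"
    if "a \<le> b" "c \<le> d" "a \<le> c" "d < 5" "b < 5" for a b c d
  proof -
    consider "b \<le> c" | "c < b" "b \<le> d" | "d < b" by linarith
    then show ?thesis
    proof cases
      case 1 then show ?thesis using sorted_le that by simp
    next
      case 2 then show ?thesis using sorted_le[of a c b d] swap(2)[of a c b d] that by simp
    next
      case 3 then show ?thesis
        using sorted_le[of a c d b] swap(2)[of a b c d] swap(3)[of a c b d] that by simp
    qed
  qed
  have pairs_le: "plucker_form P a b c d = 0"
    if "a \<le> b" "c \<le> d" "a < 5" "b < 5" "c < 5" "d < 5" for a b c d
    using first_le_third[of a b c d] first_le_third[of c d a b] swap(4)[of a b c d] that
    by (cases "a \<le> c") auto
  have "plucker_form P a b c d = 0" if "c \<le> d" "a < 5" "b < 5" "c < 5" "d < 5" for a b c d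
    using pairs_le[of a b c d] pairs_le[of b a c d] swap(1)[of a b c d] that
    by (cases "a \<le> b") auto
  then show ?thesis
    using swap(3)[of a b c d] assms(4-7) by (cases "c \<le> d") (auto simp: neg_equal_0_iff_equal)
qed

definition ext_vector :: "(nat \<Rightarrow> 'k::field) \<Rightarrow> 'k ext" where
  "ext_vector f = (\<lambda>S. if is_singleton S \<and> the_elem S < 5 then f (the_elem S) else 0)"

lemma ext_vector_in_ext_grade_1: "ext_vector f \<in> ext_grade 1"
  unfolding ext_grade_def ext_vector_def by (auto simp: is_singleton_def)

lemma ext_vector_apply: "m < 5 \<Longrightarrow> ext_vector f {m} = f m"
  by (simp add: ext_vector_def)

lemma decomposable_if_wedge_self_eq_0:
  fixes u :: "'k::field ext"
  assumes two: "(2::'k) \<noteq> 0" and u: "u \<in> ext_grade 2" "wedge u u = 0"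
  obtains a b where "a \<in> ext_grade 1" "b \<in> ext_grade 1" "u = wedge a b"
proof (cases "u = 0")
  case True
  then show ?thesis using that[of 0 0] by simp
next
  case False
  then obtain k l where kl: "k < l" "l < 5" "u {k, l} \<noteq> 0"
    using ext_grade_2_nonzero_coeff[OF u(1)] by blast
  define P where "P x y = (if x < y then u {x, y} else if y < x then - u {x, y} else 0)" for x y
  have anti: "P a b = - P b a" for a b
    unfolding P_def by (cases a b rule: linorder_cases) (auto simp: insert_commute)
  have diag: "P a a = 0" for a
    unfolding P_def by simp
  have sorted: "plucker_form P a b c d = 0" if "a < b" "b < c" "c < d" "d < 5" for a b c d
  proof -
    have "0 = wedge u u {a, b, c, d}" by (simp add: u(2))
    also have "\<dots> = 2 * plucker_form P a b c d"
      using that by (simp add: wedge_apply_4_22[OF u(1) u(1)] plucker_form_def P_def algebra_simps)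
    finally show ?thesis using two by simp
  qed
  text \<open>The two factors are the contractions of \<open>u\<close> with the dual basis vectors
    \<open>e\<^sub>k\<^sup>*\<close> and \<open>e\<^sub>l\<^sup>*\<close>; the Pluecker relations say that their product
    is \<open>u{k,l} u\<close>.\<close>
  define a where "a = ext_vector (P k)"
  define b where "b = ext_vector (P l)"
  have ab: "wedge a b = escale (u {k, l}) u"
  proof (rule ext_grade_2_eqI)
    show "wedge a b \<in> ext_grade 2"
      unfolding a_def b_def by (intro wedge_in_ext_grade_2 ext_vector_in_ext_grade_1)
    show "escale (u {k, l}) u \<in> ext_grade 2" using ext_grade_scale u(1) by blast
    fix x y :: nat assume xy: "x < y" "y < 5"
    have "wedge a b {x, y} = P k x * P l y - P k y * P l x"
      unfolding a_def b_def wedge_apply_2[OF ext_vector_in_ext_grade_1 ext_vector_in_ext_grade_1 xy(1)]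
      using xy by (simp add: ext_vector_apply)
    also have "\<dots> = P k l * P x y"
      using plucker_form_eq_0[of P, OF anti diag sorted, of k l x y] kl xy
      by (simp add: plucker_form_def algebra_simps)
    also have "\<dots> = u {k, l} * u {x, y}" using kl xy by (simp add: P_def)
    finally show "wedge a b {x, y} = escale (u {k, l}) u {x, y}" by simp
  qed
  have "u = wedge (escale (1 / u {k, l}) a) b"
    using kl(3) by (simp add: wedge_scale_left ab)
  moreover have "escale (1 / u {k, l}) a \<in> ext_grade 1" "b \<in> ext_grade 1"
    unfolding a_def b_def by (intro ext_grade_scale ext_vector_in_ext_grade_1)+
  ultimately show ?thesis using that by blast
qed

lemma in_span_pair_if_wedge_eq_0:
  assumes a: "a \<in> ext_grade 1" and b: "b \<in> ext_grade 1" and z: "z \<in> ext_grade 1"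
    and h: "wedge (wedge a b) z = 0" and nz: "wedge a b \<noteq> 0"
  obtains \<alpha> \<beta> where "z = escale \<alpha> a + escale \<beta> b"
proof -
  obtain i j where ij: "i < j" "j < 5" "wedge a b {i, j} \<noteq> 0"
    using ext_grade_2_nonzero_coeff[OF wedge_in_ext_grade_2[OF a b] nz] by blast
  text \<open>Cramer's rule for the nonzero \<open>2 \<times> 2\<close> minor \<open>Q\<close> of \<open>a, b\<close>.\<close>
  define Q where "Q = a{i} * b{j} - a{j} * b{i}"
  define p where "p = z{i} * b{j} - z{j} * b{i}"
  define q where "q = a{i} * z{j} - a{j} * z{i}"
  have Q: "Q \<noteq> 0" using ij wedge_apply_2[OF a b ij(1)] by (simp add: Q_def)
  have cramer: "z{m} * Q = p * a{m} + q * b{m}" if "m < 5" for m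
  proof -
    consider "m = i" | "m = j" | "m < i" | "i < m" "m < j" | "j < m" using ij by linarith
    then show ?thesis
    proof cases
      case 3
      have "wedge (wedge a b) z {m, i, j} = 0" by (simp add: h)
      then show ?thesis
        unfolding wedge_apply_3_vectors[OF a b z 3 ij(1)] Q_def p_def q_def by algebra
    next
      case 4
      have "wedge (wedge a b) z {i, m, j} = 0" by (simp add: h)
      then show ?thesis
        unfolding wedge_apply_3_vectors[OF a b z 4] Q_def p_def q_def by algebra
    next
      case 5
      have "wedge (wedge a b) z {i, j, m} = 0" by (simp add: h)
      then show ?thesis
        unfolding wedge_apply_3_vectors[OF a b z ij(1) 5] Q_def p_def q_def by algebra
    qed (simp_all add: Q_def p_def q_def algebra_simps)
  qed
  have "z = escale (p / Q) a + escale (q / Q) b"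
  proof (rule ext_grade_1_eqI[OF z ext_grade_lincomb[OF a b]])
    fix m :: nat assume "m < 5"
    then show "z {m} = (escale (p / Q) a + escale (q / Q) b) {m}"
      using cramer[of m] Q by (simp add: field_simps)
  qed
  then show ?thesis by (rule that)
qed

lemma in_span_triple_if_wedge_eq_0:
  fixes a b c z :: "'k::field ext"
  assumes a: "a \<in> ext_grade 1" and b: "b \<in> ext_grade 1" and c: "c \<in> ext_grade 1"
    and z: "z \<in> ext_grade 1"
    and h: "wedge (wedge a b) (wedge c z) = 0" and nz: "wedge (wedge a b) c \<noteq> 0"
  obtains \<alpha> \<beta> \<gamma> where "z = escale \<alpha> a + escale \<beta> b + escale \<gamma> c"
proof -
  obtain i j k where ijk: "i < j" "j < k" "k < 5" "wedge (wedge a b) c {i, j, k} \<noteq> 0"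
    using ext_grade_3_nonzero_coeff[OF wedge_in_ext_grade_3[OF wedge_in_ext_grade_2[OF a b] c] nz]
    by blast
  text \<open>Cramer's rule for the nonzero \<open>3 \<times> 3\<close> minor \<open>R\<close> of \<open>a, b, c\<close>.\<close>
  define minor where "minor x y w = (x{i}*y{j} - x{j}*y{i})*w{k} - (x{i}*y{k} - x{k}*y{i})*w{j}
    + (x{j}*y{k} - x{k}*y{j})*w{i}" for x y w :: "'k ext"
  define R where "R = minor a b c"
  define p where "p = minor z b c"
  define q where "q = minor a z c"
  define r where "r = minor a b z"
  have R: "R \<noteq> 0"
    using ijk wedge_apply_3_vectors[OF a b c ijk(1,2)] by (simp add: R_def minor_def)
  have cramer: "z{m} * R = p * a{m} + q * b{m} + r * c{m}" if "m < 5" for m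
  proof -
    consider "m = i" | "m = j" | "m = k" | "m < i" | "i < m" "m < j" | "j < m" "m < k" | "k < m"
      using ijk by linarith
    then show ?thesis
    proof cases
      case 4
      have "wedge (wedge a b) (wedge c z) {m, i, j, k} = 0" by (simp add: h)
      then show ?thesis unfolding wedge_apply_4_vectors[OF a b c z 4 ijk(1,2)]
          R_def p_def q_def r_def minor_def by algebra
    next
      case 5
      have "wedge (wedge a b) (wedge c z) {i, m, j, k} = 0" by (simp add: h)
      then show ?thesis unfolding wedge_apply_4_vectors[OF a b c z 5 ijk(2)]
          R_def p_def q_def r_def minor_def by algebra
    next
      case 6
      have "wedge (wedge a b) (wedge c z) {i, j, m, k} = 0" by (simp add: h)
      then show ?thesis unfolding wedge_apply_4_vectors[OF a b c z ijk(1) 6]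
          R_def p_def q_def r_def minor_def by algebra
    next
      case 7
      have "wedge (wedge a b) (wedge c z) {i, j, k, m} = 0" by (simp add: h)
      then show ?thesis unfolding wedge_apply_4_vectors[OF a b c z ijk(1,2) 7]
          R_def p_def q_def r_def minor_def by algebra
    qed (simp_all add: R_def p_def q_def r_def minor_def algebra_simps)
  qed
  have "z = escale (p / R) a + escale (q / R) b + escale (r / R) c"
  proof (rule ext_grade_1_eqI[OF z ext_grade_add[OF ext_grade_lincomb[OF a b] ext_grade_scale[OF c]]])
    fix m :: nat assume "m < 5"
    then show "z {m} = (escale (p / R) a + escale (q / R) b + escale (r / R) c) {m}"
      using cramer[of m] R by (simp add: field_simps)
  qed
  then show ?thesis by (rule that)
qed

lemma wedge_lincomb_right:
  "a \<in> ext_grade 1 \<Longrightarrow> wedge a (escale \<alpha> a + escale \<beta> b) = escale \<beta> (wedge a b)"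
  by (simp add: wedge_add_right wedge_scale_right wedge_self_grade_1 ext.scale_zero_right)

lemma wedge_lincomb_left:
  "b \<in> ext_grade 1 \<Longrightarrow> wedge (escale \<alpha> a + escale \<beta> b) b = escale \<alpha> (wedge a b)"
  by (simp add: wedge_add_left wedge_scale_left wedge_self_grade_1 ext.scale_zero_right)

lemma wedge_eq_wedge_if_first_factor_in_span:
  assumes a: "a \<in> ext_grade 1" and b: "b \<in> ext_grade 1"
    and f: "f = escale \<alpha> a + escale \<beta> b" and nz: "f \<noteq> 0"
  obtains x where "x \<in> ext_grade 1" "wedge a b = wedge f x"
proof (cases "\<alpha> = 0")
  case False
  have "wedge f (escale (1 / \<alpha>) b) = wedge a b"
    using False by (simp add: f wedge_scale_right wedge_lincomb_left[OF b])
  then show ?thesis using that ext_grade_scale[OF b] by metis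
next
  case True
  then have f': "f = escale \<beta> b" using f by (simp add: fun_eq_iff)
  then have "\<beta> \<noteq> 0" using nz by (auto simp: fun_eq_iff)
  then have "wedge f (escale (- 1 / \<beta>) a) = wedge a b"
    by (simp add: f' wedge_scale_left wedge_scale_right wedge_minus_right wedge_commute_grade_1[OF a b])
  then show ?thesis using that ext_grade_scale[OF a] by metis
qed

lemma common_factor_if_wedge_eq_0:
  assumes a: "a \<in> ext_grade 1" and b: "b \<in> ext_grade 1"
    and c: "c \<in> ext_grade 1" and d: "d \<in> ext_grade 1"
    and h: "wedge (wedge a b) (wedge c d) = 0"
    and nz1: "wedge a b \<noteq> 0" and nz2: "wedge c d \<noteq> 0"
  obtains f x y where "f \<in> ext_grade 1" "x \<in> ext_grade 1" "y \<in> ext_grade 1" "f \<noteq> 0"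
    "wedge a b = wedge f x" "wedge c d = wedge f y"
proof (cases "wedge (wedge a b) c = 0")
  case True
  obtain \<alpha> \<beta> where "c = escale \<alpha> a + escale \<beta> b"
    using in_span_pair_if_wedge_eq_0[OF a b c True nz1] .
  moreover have "c \<noteq> 0" using nz2 by auto
  ultimately obtain x where "x \<in> ext_grade 1" "wedge a b = wedge c x"
    using wedge_eq_wedge_if_first_factor_in_span[OF a b] by blast
  then show ?thesis using that c d \<open>c \<noteq> 0\<close> by blast
next
  case False
  obtain \<alpha> \<beta> \<gamma> where "d = escale \<alpha> a + escale \<beta> b + escale \<gamma> c"
    using in_span_triple_if_wedge_eq_0[OF a b c d h False] .
  then obtain f where f: "f = escale \<alpha> a + escale \<beta> b" "d = f + escale \<gamma> c" by blast
  have cd: "wedge c d = wedge c f"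
    by (simp add: f(2) wedge_add_right wedge_scale_right wedge_self_grade_1[OF c])
  have "f \<noteq> 0" using nz2 cd by auto
  then obtain x where x: "x \<in> ext_grade 1" "wedge a b = wedge f x"
    using wedge_eq_wedge_if_first_factor_in_span[OF a b f(1)] by blast
  have fG: "f \<in> ext_grade 1" using f(1) ext_grade_lincomb[OF a b] by simp
  have "wedge c d = wedge f (- c)"
    unfolding cd wedge_minus_right wedge_commute_grade_1[OF fG c] ..
  then show ?thesis using that x fG \<open>f \<noteq> 0\<close> ext_grade_neg[OF c] by blast
qed

subsection \<open>A dimension bound\<close>

lemma ext_grade_3_eq_0_if_wedge_eq_0:
  assumes X: "X \<in> ext_grade 3" and e: "e \<in> ext_grade 1" "e {k} \<noteq> 0"
    and h: "wedge X e = 0" and vanish: "\<And>S. k \<in> S \<Longrightarrow> X S = 0"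
  shows "X = 0"
proof (rule ext_grade_eqI[OF X zero_in_ext_grade])
  fix S :: "nat set" assume S: "card S = 3"
  then have fin: "finite S" by (metis card.infinite zero_neq_numeral)
  show "X S = 0 S"
  proof (cases "k \<in> S")
    case False
    let ?T = "insert k S"
    have "0 = wedge X e ?T" by (simp add: h)
    also have "\<dots> = (\<Sum>m\<in>?T. shuffle_sign (?T - {m}) {m} * X (?T - {m}) * e {m})"
      using wedge_grade_1_right_apply[OF e(1)] fin by simp
    also have "\<dots> = shuffle_sign S {k} * X S * e {k}"
      using fin False by (auto simp: insert_Diff_if vanish intro!: sum.neutral)
    finally show ?thesis using e(2) by simp
  qed (simp add: vanish)
qed

lemma card_3_subsets_containing:
  assumes "k < (5::nat)"
  shows "card {S. S \<subseteq> {..<5} \<and> card S = 3 \<and> k \<in> S} = 6"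
proof -
  let ?T = "{T. T \<subseteq> {..<5} - {k} \<and> card T = 2}"
  have "{S. S \<subseteq> {..<5} \<and> card S = 3 \<and> k \<in> S} = insert k ` ?T"
  proof (intro equalityI subsetI)
    fix S assume S: "S \<in> {S. S \<subseteq> {..<5} \<and> card S = 3 \<and> k \<in> S}"
    then have "finite S" by (metis (mono_tags) card.infinite mem_Collect_eq zero_neq_numeral)
    then have "S - {k} \<in> ?T" using S by auto
    moreover have "S = insert k (S - {k})" using S by auto
    ultimately show "S \<in> insert k ` ?T" by blast
  next
    fix S assume "S \<in> insert k ` ?T"
    then obtain T where T: "S = insert k T" "T \<subseteq> {..<5} - {k}" "card T = 2" by auto
    moreover have "finite T" "k \<notin> T" using T(2,3) by (auto intro: card_ge_0_finite)
    ultimately show "S \<in> {S. S \<subseteq> {..<5} \<and> card S = 3 \<and> k \<in> S}" using T assms by auto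
  qed
  moreover have "inj_on (insert k) ?T" by (auto simp: inj_on_def)
  moreover have "card ?T = 4 choose 2"
    using n_subsets[of "{..<5::nat} - {k}" 2] assms by simp
  ultimately show ?thesis by (simp add: card_image choose_two)
qed

lemma sum_fun_apply: "(sum g F) T = (\<Sum>S\<in>F. g S T)"
  by (induct F rule: infinite_finite_induct) auto

text \<open>If \<open>e{k} \<noteq> 0\<close>, keeping only the six coefficients at 3-sets containing \<open>k\<close> is injective
  on the annihilator of \<open>e\<close>.\<close>

lemma dim_le_6_if_wedge_eq_0:
  fixes e :: "'k::field ext"
  assumes e: "e \<in> ext_grade 1" "e \<noteq> 0" and V: "ext_subspace V"
    and ann: "V \<subseteq> {X. X \<in> ext_grade 3 \<and> wedge X e = 0}"
  shows "ext_dim V \<le> 6"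
proof -
  obtain k where k: "k < 5" "e {k} \<noteq> 0" using ext_grade_1_nonzero_coeff[OF e] .
  define \<rho> where "\<rho> X = (\<lambda>S. if k \<in> S then X S else 0)" for X :: "'k ext"
  have hom: "module_hom escale escale \<rho>"
    unfolding module_hom_iff using vector_space_escale[unfolded module_iff_vector_space[symmetric]]
    by (auto simp: \<rho>_def fun_eq_iff)
  have inj: "inj_on \<rho> V"
  proof (rule inj_onI)
    fix X Y assume XY: "X \<in> V" "Y \<in> V" "\<rho> X = \<rho> Y"
    then have "X - Y \<in> V" using ext.subspace_diff[OF V] by blast
    moreover have "(X - Y) S = 0" if "k \<in> S" for S
      using fun_cong[OF XY(3), of S] that by (simp add: \<rho>_def)
    ultimately have "X - Y = 0" using ann ext_grade_3_eq_0_if_wedge_eq_0[OF _ e(1) k(2)] by blast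
    then show "X = Y" by simp
  qed
  obtain B where B: "B \<subseteq> V" "ext.independent B" "V \<subseteq> ext.span B" "card B = ext.dim V"
    using ext.basis_exists by blast
  have indep: "ext.independent (\<rho> ` B)"
    using module_hom.independent_injective_image[OF hom B(2)] inj
      ext.span_minimal[OF B(1) V] inj_on_subset by blast
  define F where "F = {S. S \<subseteq> {..<5} \<and> card S = 3 \<and> k \<in> S}"
  define unit :: "nat set \<Rightarrow> 'k ext" where "unit S = (\<lambda>T. if T = S then 1 else 0)" for S
  have fin: "finite F" unfolding F_def
    by (rule finite_subset[of _ "Pow {..<5}"]) auto
  have \<rho>_eq: "\<rho> X = (\<Sum>S\<in>F. escale (X S) (unit S))" if "X \<in> ext_grade 3" for X
  proof
    fix T
    have "(\<Sum>S\<in>F. escale (X S) (unit S)) T = (\<Sum>S\<in>F. if S = T then X T else 0)"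
      unfolding sum_fun_apply by (rule sum.cong) (auto simp: unit_def)
    also have "\<dots> = \<rho> X T" using fin that unfolding \<rho>_def F_def ext_grade_def by auto
    finally show "\<rho> X T = (\<Sum>S\<in>F. escale (X S) (unit S)) T" by simp
  qed
  have "\<rho> X \<in> ext.span (unit ` F)" if "X \<in> ext_grade 3" for X
    unfolding \<rho>_eq[OF that] by (intro ext.span_sum ext.span_scale ext.span_base imageI)
  then have "\<rho> ` B \<subseteq> ext.span (unit ` F)" using B(1) ann by blast
  then have "card (\<rho> ` B) \<le> card (unit ` F)"
    using ext.independent_span_bound[OF _ indep] fin by blast
  also have "\<dots> \<le> 6"
    using card_image_le[OF fin, of unit] card_3_subsets_containing[OF k(1)] by (simp add: F_def)
  finally have "card (\<rho> ` B) \<le> 6" .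
  moreover have "inj_on \<rho> B" using inj B(1) inj_on_subset by blast
  ultimately show ?thesis using B(4) by (simp add: card_image)
qed

lemma subspace_wedge_annihilator: "ext_subspace {X. X \<in> ext_grade n \<and> wedge X e = 0}"
  unfolding ext.subspace_def
  by (auto simp: wedge_add_left wedge_scale_left ext.scale_zero_right
      intro: ext_grade_add ext_grade_scale)

lemma dim_wedge_sp_le_6_if_common_factor:
  assumes f: "f \<in> ext_grade 1" "f \<noteq> 0"
    and U: "U \<subseteq> ext_span {wedge f w | w. w \<in> ext_grade 1}"
  shows "ext_dim (wedge_sp U (ext_grade 1)) \<le> 6"
proof (rule dim_le_6_if_wedge_eq_0[OF f])
  show "ext_subspace (wedge_sp U (ext_grade 1))"
    unfolding wedge_sp_def by (rule ext.subspace_span)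
  have "wedge u v \<in> {X. X \<in> ext_grade 3 \<and> wedge X f = 0}"
    if "u \<in> U" "v \<in> ext_grade 1" for u v
  proof (rule wedge_span_subset[OF subspace_wedge_annihilator])
    show "u \<in> ext_span {wedge f w | w. w \<in> ext_grade 1}" using U that(1) by blast
    show "v \<in> ext_span (ext_grade 1)" using that(2) by (rule ext.span_base)
  qed (use f(1) wedge_in_ext_grade_2 wedge_in_ext_grade_3 wedge_wedge_wedge_self in blast)
  then show "wedge_sp U (ext_grade 1) \<subseteq> {X. X \<in> ext_grade 3 \<and> wedge X f = 0}"
    unfolding wedge_sp_def by (intro ext.span_minimal subspace_wedge_annihilator) blast
qed

subsection \<open>Subspaces of \<open>\<And>\<^sup>2 W\<close> for a 3-dimensional \<open>W\<close>\<close>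

lemma wedge_eq_0_if_in_wedge_sp_dim_3:
  fixes W :: "'k::field ext set"
  assumes W: "W \<subseteq> ext_grade 1" "ext_dim W = 3"
    and u: "u \<in> wedge_sp W W" "u' \<in> wedge_sp W W"
  shows "wedge u u' = 0"
proof -
  obtain B where B: "B \<subseteq> W" "W \<subseteq> ext.span B" "card B = 3"
    using ext.basis_exists W(2) by metis
  then obtain x y z where xyz: "B = {x, y, z}" by (meson card_3_iff)
  have G: "x \<in> ext_grade 1" "y \<in> ext_grade 1" "z \<in> ext_grade 1" using B(1) W(1) xyz by auto
  define S2 where "S2 = ext_span {wedge x y, wedge x z, wedge y z}"
  have S2: "ext_subspace S2" unfolding S2_def by simp
  have gen: "wedge a b \<in> S2" if "a \<in> {x, y, z}" "b \<in> {x, y, z}" for a b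
  proof -
    have "wedge a b \<in> {wedge x y, wedge x z, wedge y z, - wedge x y, - wedge x z, - wedge y z, 0}"
      using that by (auto simp: wedge_commute_grade_1[OF G(1) G(2)] wedge_commute_grade_1[OF G(1) G(3)]
          wedge_commute_grade_1[OF G(2) G(3)] wedge_self_grade_1[OF G(1)]
          wedge_self_grade_1[OF G(2)] wedge_self_grade_1[OF G(3)])
    then show ?thesis
      unfolding S2_def by (auto intro: ext.span_neg[OF ext.span_base] ext.span_base ext.span_zero)
  qed
  have "wedge_sp W W \<subseteq> S2"
    unfolding wedge_sp_def
  proof (intro ext.span_minimal[OF _ S2] subsetI)
    fix t assume "t \<in> {wedge u v |u v. u \<in> W \<and> v \<in> W}"
    then obtain a b where t: "t = wedge a b" "a \<in> ext_span {x, y, z}" "b \<in> ext_span {x, y, z}"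
      using B(2) xyz by blast
    show "t \<in> S2" unfolding t(1) using wedge_span_subset[OF S2 gen t(2,3)] .
  qed
  then have "u \<in> S2" "u' \<in> S2" using u by auto
  text \<open>Any two of \<open>x \<and> y\<close>, \<open>x \<and> z\<close>, \<open>y \<and> z\<close> have a common factor.\<close>
  moreover have "wedge p q \<in> {0}"
    if "p \<in> {wedge x y, wedge x z, wedge y z}" "q \<in> {wedge x y, wedge x z, wedge y z}" for p q
  proof -
    have "wedge (wedge a b) (wedge c d) = 0"
      if "{a, b, c, d} \<subseteq> {x, y, z}" "a = c \<or> a = d \<or> b = c \<or> b = d" for a b c d
      using that G by (intro wedge_wedge_eq_0_if_common_factor) auto
    then show ?thesis using that by auto
  qed
  moreover have "ext_subspace {0 :: 'k ext}"
    unfolding ext.subspace_def by (simp add: ext.scale_zero_right)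
  ultimately show ?thesis
    using wedge_span_subset[of "{0}"] unfolding S2_def by blast
qed

subsection \<open>Three 2-vectors with vanishing products\<close>

lemma dim_span_eq_3_if_wedge_ne_0:
  assumes f: "f \<in> ext_grade 1" and x: "x \<in> ext_grade 1" and y: "y \<in> ext_grade 1"
    and nz: "wedge (wedge f x) y \<noteq> 0"
  shows "ext_dim (ext_span {f, x, y}) = 3"
proof -
  have distinct: "f \<noteq> x" "f \<noteq> y" "x \<noteq> y"
    using nz wedge_self_grade_1[OF f] wedge_wedge_left_self[OF f x] wedge_wedge_right_self[OF f x]
    by auto
  have "x \<notin> ext_span {y}"
  proof
    assume "x \<in> ext_span {y}"
    then obtain \<beta> where "x = escale \<beta> y" using ext.span_singleton by blast
    then show False
      using nz wedge_wedge_right_self[OF f y] by (simp add: wedge_scale_left wedge_scale_right)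
  qed
  moreover have "f \<notin> ext_span {x, y}"
  proof
    assume "f \<in> ext_span {x, y}"
    then obtain \<alpha> \<beta> where "f - escale \<alpha> x \<in> ext_span {y}" using ext.span_breakdown_eq by blast
    then obtain \<beta> where "f - escale \<alpha> x = escale \<beta> y" using ext.span_singleton by blast
    then have "f = escale \<alpha> x + escale \<beta> y" by (simp add: algebra_simps)
    then have "wedge (wedge f x) y = escale \<beta> (wedge (wedge y x) y)"
      by (simp add: wedge_add_left wedge_scale_left wedge_self_grade_1[OF x] ext.scale_zero_right)
    then show False using nz wedge_wedge_left_self[OF y x] by (simp add: ext.scale_zero_right)
  qed
  moreover have "y \<noteq> 0" using nz by auto
  ultimately have "ext.independent {f, x, y}"
    using distinct by (simp add: ext.independent_insert)
  then show ?thesis using distinct by (simp add: ext.dim_eq_card_independent)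
qed

lemma factor_in_span_if_wedge_eq:
  assumes "a \<in> ext_grade 1" "b \<in> ext_grade 1" "c \<in> ext_grade 1" "d \<in> ext_grade 1"
    and "wedge a b = wedge c d" "wedge a b \<noteq> 0"
  obtains \<alpha> \<beta> where "c = escale \<alpha> a + escale \<beta> b"
proof -
  have "wedge (wedge a b) c = 0" using assms(5) wedge_wedge_left_self[OF assms(3,4)] by simp
  then show ?thesis using in_span_pair_if_wedge_eq_0[OF assms(1-3) _ assms(6)] that by blast
qed

lemma second_coeff_eq_0_if_in_both_spans:
  assumes f: "f \<in> ext_grade 1" and x: "x \<in> ext_grade 1" and y: "y \<in> ext_grade 1"
    and nz: "wedge (wedge f x) y \<noteq> 0"
    and g: "g = escale \<alpha> f + escale \<beta> x" "g = escale \<alpha>' f + escale \<beta>' y"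
  shows "\<beta> = 0"
proof -
  have "escale \<beta> (wedge f x) = escale \<beta>' (wedge f y)"
    using wedge_lincomb_right[OF f, of \<alpha> \<beta> x] wedge_lincomb_right[OF f, of \<alpha>' \<beta>' y] g by simp
  then have "escale \<beta> (wedge (wedge f x) y) = escale \<beta>' (wedge (wedge f y) y)"
    by (metis wedge_scale_left)
  then have "escale \<beta> (wedge (wedge f x) y) = 0"
    by (simp add: wedge_wedge_right_self[OF f y] ext.scale_zero_right)
  then show ?thesis using nz by simp
qed

lemma third_factor_cases:
  assumes f: "f \<in> ext_grade 1" and x: "x \<in> ext_grade 1" and y: "y \<in> ext_grade 1"
    and nz: "wedge (wedge f x) y \<noteq> 0"
    and a: "a \<in> ext_grade 1" and b: "b \<in> ext_grade 1" and ab: "wedge a b \<noteq> 0"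
    and hx: "wedge (wedge f x) (wedge a b) = 0" and hy: "wedge (wedge f y) (wedge a b) = 0"
  shows "(\<exists>g h. g \<in> ext_span {f, x, y} \<and> h \<in> ext_span {f, x, y} \<and> wedge a b = wedge g h)
    \<or> (\<exists>z \<in> ext_grade 1. wedge a b = wedge f z)"
proof -
  have fx: "wedge f x \<noteq> 0" and fy: "wedge f y \<noteq> 0"
    using nz wedge_wedge_swap_right[OF f x y] by auto
  obtain g x' z where g: "g \<in> ext_grade 1" "x' \<in> ext_grade 1" "z \<in> ext_grade 1" "g \<noteq> 0"
    "wedge f x = wedge g x'" "wedge a b = wedge g z"
    using common_factor_if_wedge_eq_0[OF f x a b hx fx ab] .
  obtain \<alpha>\<^sub>1 \<beta>\<^sub>1 where g_fx: "g = escale \<alpha>\<^sub>1 f + escale \<beta>\<^sub>1 x"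
    using factor_in_span_if_wedge_eq[OF f x g(1,2,5) fx] .
  obtain h y' z' where h: "h \<in> ext_grade 1" "y' \<in> ext_grade 1" "z' \<in> ext_grade 1" "h \<noteq> 0"
    "wedge f y = wedge h y'" "wedge a b = wedge h z'"
    using common_factor_if_wedge_eq_0[OF f y a b hy fy ab] .
  obtain \<alpha>\<^sub>2 \<beta>\<^sub>2 where h_fy: "h = escale \<alpha>\<^sub>2 f + escale \<beta>\<^sub>2 y"
    using factor_in_span_if_wedge_eq[OF f y h(1,2,5) fy] .
  obtain \<gamma> \<delta> where h_gz: "h = escale \<gamma> g + escale \<delta> z"
    using factor_in_span_if_wedge_eq[OF g(1,3) h(1,3)] g(6) h(6) ab by metis
  have gh: "wedge g h = escale \<delta> (wedge a b)"
    using wedge_lincomb_right[OF g(1)] h_gz g(6) by simp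
  show ?thesis
  proof (cases "\<delta> = 0")
    case False
    have "g \<in> ext_span {f, x, y}" "h \<in> ext_span {f, x, y}"
      unfolding g_fx h_fy by (simp_all add: ext.span_add ext.span_scale ext.span_base)
    moreover have "wedge a b = wedge g (escale (1 / \<delta>) h)"
      using False by (simp add: wedge_scale_right gh)
    ultimately show ?thesis by (blast intro: ext.span_scale)
  next
    case True
    then have "h = escale \<gamma> g" using h_gz by (simp add: fun_eq_iff)
    moreover have "\<gamma> \<noteq> 0" using h(4) calculation by (auto simp: fun_eq_iff)
    ultimately have "g = escale (\<alpha>\<^sub>2 / \<gamma>) f + escale (\<beta>\<^sub>2 / \<gamma>) y"
      using h_fy by (simp add: fun_eq_iff field_simps)
    then have "\<beta>\<^sub>1 = 0" using second_coeff_eq_0_if_in_both_spans[OF f x y nz g_fx] by blast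
    then have "wedge a b = wedge f (escale \<alpha>\<^sub>1 z)"
      using g(6) g_fx by (simp add: wedge_scale_left wedge_scale_right)
    then show ?thesis using ext_grade_scale[OF g(3)] by blast
  qed
qed

lemma square_zero_basis_cases:
  fixes B :: "'k::field ext set"
  assumes two: "(2::'k) \<noteq> 0"
    and B: "B \<subseteq> ext_grade 2" "ext.independent B" "card B = 3"
    and sq: "\<And>u u'. u \<in> B \<Longrightarrow> u' \<in> B \<Longrightarrow> wedge u u' = 0"
  obtains W where "ext_subspace W" "W \<subseteq> ext_grade 1" "ext_dim W = 3" "B \<subseteq> wedge_sp W W"
  | f where "f \<in> ext_grade 1" "f \<noteq> 0" "B \<subseteq> {wedge f w | w. w \<in> ext_grade 1}"
proof -
  obtain u\<^sub>1 u\<^sub>2 u\<^sub>3 where u: "B = {u\<^sub>1, u\<^sub>2, u\<^sub>3}" "u\<^sub>1 \<noteq> u\<^sub>2" "u\<^sub>2 \<noteq> u\<^sub>3" "u\<^sub>1 \<noteq> u\<^sub>3"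
    using B(3) by (auto simp: card_3_iff)
  have "0 \<notin> B" using B(2) ext.dependent_zero by blast
  then have nz: "u\<^sub>1 \<noteq> 0" "u\<^sub>2 \<noteq> 0" "u\<^sub>3 \<noteq> 0" using u(1) by auto
  have "u\<^sub>2 \<notin> ext_span (B - {u\<^sub>2})" using B(2) u(1) ext.dependent_def by blast
  moreover have "ext_span {u\<^sub>1} \<subseteq> ext_span (B - {u\<^sub>2})" using u by (intro ext.span_mono) auto
  ultimately have u\<^sub>2: "u\<^sub>2 \<notin> ext_span {u\<^sub>1}" by blast
  have uB: "u\<^sub>1 \<in> B" "u\<^sub>2 \<in> B" "u\<^sub>3 \<in> B" using u(1) by auto
  obtain a\<^sub>1 b\<^sub>1 where ab\<^sub>1: "a\<^sub>1 \<in> ext_grade 1" "b\<^sub>1 \<in> ext_grade 1" "u\<^sub>1 = wedge a\<^sub>1 b\<^sub>1"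
    using decomposable_if_wedge_self_eq_0[OF two _ sq] B(1) uB by blast
  obtain a\<^sub>2 b\<^sub>2 where ab\<^sub>2: "a\<^sub>2 \<in> ext_grade 1" "b\<^sub>2 \<in> ext_grade 1" "u\<^sub>2 = wedge a\<^sub>2 b\<^sub>2"
    using decomposable_if_wedge_self_eq_0[OF two _ sq] B(1) uB by blast
  obtain a\<^sub>3 b\<^sub>3 where ab\<^sub>3: "a\<^sub>3 \<in> ext_grade 1" "b\<^sub>3 \<in> ext_grade 1" "u\<^sub>3 = wedge a\<^sub>3 b\<^sub>3"
    using decomposable_if_wedge_self_eq_0[OF two _ sq] B(1) uB by blast
  obtain f x y where fxy: "f \<in> ext_grade 1" "x \<in> ext_grade 1" "y \<in> ext_grade 1" "f \<noteq> 0"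
    "u\<^sub>1 = wedge f x" "u\<^sub>2 = wedge f y"
    using common_factor_if_wedge_eq_0[OF ab\<^sub>1(1,2) ab\<^sub>2(1,2)] sq[OF uB(1,2)] nz(1,2) ab\<^sub>1(3) ab\<^sub>2(3)
    by metis
  have nz_fxy: "wedge (wedge f x) y \<noteq> 0"
  proof
    assume "wedge (wedge f x) y = 0"
    then obtain \<alpha> \<beta> where "y = escale \<alpha> f + escale \<beta> x"
      using in_span_pair_if_wedge_eq_0[OF fxy(1-3)] nz(1) fxy(5) by metis
    then have "u\<^sub>2 = escale \<beta> u\<^sub>1" using fxy wedge_lincomb_right by metis
    then show False using u\<^sub>2 by (simp add: ext.span_base ext.span_scale)
  qed
  from third_factor_cases[OF fxy(1-3) nz_fxy ab\<^sub>3(1,2)] ab\<^sub>3(3) nz(3) sq[OF uB(1,3)] sq[OF uB(2,3)] fxy(5,6)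
  consider g h where "g \<in> ext_span {f, x, y}" "h \<in> ext_span {f, x, y}" "u\<^sub>3 = wedge g h"
    | z where "z \<in> ext_grade 1" "u\<^sub>3 = wedge f z"
    by blast
  then show ?thesis
  proof cases
    case (1 g h)
    let ?W = "ext_span {f, x, y}"
    have "?W \<subseteq> ext_grade 1"
      using fxy(1-3) subspace_ext_grade by (intro ext.span_minimal) auto
    moreover have "{f, x, y} \<subseteq> ?W" by (rule ext.span_superset)
    then have "B \<subseteq> wedge_sp ?W ?W"
      unfolding wedge_sp_def u(1) fxy(5,6) 1(3) using 1(1,2) by (blast intro: ext.span_base)
    ultimately show ?thesis
      using that(1)[OF ext.subspace_span _ dim_span_eq_3_if_wedge_ne_0[OF fxy(1-3) nz_fxy]] by blast
  next
    case (2 z)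
    then show ?thesis using that(2) fxy u(1) by blast
  qed
qed

theorem lemma5p4:
  fixes U :: "('k::alg_closed_field) ext set"
  assumes "(2::'k) \<noteq> 0"
    and "ext_subspace U" and "U \<subseteq> ext_grade 2" and "ext_dim U = 3"
    and "ext_dim (wedge_sp U (ext_grade 1)) \<ge> 7"
  shows "(\<exists>W. ext_subspace W \<and> W \<subseteq> ext_grade 1 \<and> ext_dim W = 3 \<and> U \<subseteq> wedge_sp W W)
     \<longleftrightarrow> (\<forall>u\<in>U. \<forall>u'\<in>U. wedge u u' = 0)"
proof
  assume "\<exists>W. ext_subspace W \<and> W \<subseteq> ext_grade 1 \<and> ext_dim W = 3 \<and> U \<subseteq> wedge_sp W W"
  then show "\<forall>u\<in>U. \<forall>u'\<in>U. wedge u u' = 0"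
    using wedge_eq_0_if_in_wedge_sp_dim_3 by blast
next
  assume sq: "\<forall>u\<in>U. \<forall>u'\<in>U. wedge u u' = 0"
  obtain B where B: "B \<subseteq> U" "ext.independent B" "U \<subseteq> ext_span B" "card B = 3"
    using ext.basis_exists assms(4) by metis
  show "\<exists>W. ext_subspace W \<and> W \<subseteq> ext_grade 1 \<and> ext_dim W = 3 \<and> U \<subseteq> wedge_sp W W"
  proof (rule square_zero_basis_cases[OF assms(1) _ B(2,4)])
    fix W assume W: "ext_subspace W" "W \<subseteq> ext_grade 1" "ext_dim W = 3" "B \<subseteq> wedge_sp W W"
    have "ext_span B \<subseteq> wedge_sp W W"
      using W(4) unfolding wedge_sp_def by (rule ext.span_minimal) simp
    then show ?thesis using W B(3) by blast
  next
    fix f assume "f \<in> ext_grade 1" "f \<noteq> 0" "B \<subseteq> {wedge f w | w. w \<in> ext_grade 1}"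
    then have "ext_dim (wedge_sp U (ext_grade 1)) \<le> 6"
      using B(3) ext.span_mono by (blast intro: dim_wedge_sp_le_6_if_common_factor)
    then show ?thesis using assms(5) by simp
  qed (use B(1) assms(3) sq in auto)
qed

end
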